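(* Let $A$ be an arbitrary endomorphism of $\mathbb{R}^n$. There exist instants $t_0<t_1$ in $\mathbb{R}$ that are conjugate for the system $v''=Av$ if and only if $A$ has real negative eigenvalues.
   Context: Two instants $t_0<t_1$ are conjugate for a second-order linear system in $\mathbb{R}^n$ if there exists a solution $v$ of the system, not identically zero, with $v(t_0)=v(t_1)=0$. *)

theory Defs
  imports "HOL-Analysis.Analysis"
begin

definition is_solution :: "real^'n^'n \<Rightarrow> (real \<Rightarrow> real^'n) \<Rightarrow> bool" where
  "is_solution A v \<longleftrightarrow> (\<exists>v'. \<forall>t. (v has_vector_derivative v' t) (at t) \<and>
                                  (v' has_vector_derivative (A *v v t)) (at t))"

definition conjugate :: "real^'n^'n \<Rightarrow> real \<Rightarrow> real \<Rightarrow> bool" where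
  "conjugate A t0 t1 \<longleftrightarrow> t0 < t1 \<and>
     (\<exists>v. is_solution A v \<and> (\<exists>t. v t \<noteq> 0) \<and> v t0 = 0 \<and> v t1 = 0)"

definition real_eigenvalue :: "real^'n^'n \<Rightarrow> real \<Rightarrow> bool" where
  "real_eigenvalue A l \<longleftrightarrow> (\<exists>x. x \<noteq> 0 \<and> A *v x = l *\<^sub>R x)"

end

theory Submission
  imports Defs "HOL-Computational_Algebra.Fundamental_Theorem_Algebra"
begin

text \<open>Complexify the system. For the scalar equation u'' = r u with two zeros a < b and r not a
  negative real, choose \<sigma> = 1 - i k with Re (\<sigma> r) \<ge> 0: then g = Re (\<sigma> u' conj u) is
  nondecreasing with g' \<ge> |u'|^2 and vanishes at a and b, so u' = 0 on [a, b], and an energy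
  estimate gives u = 0. For the system with complex matrix M, peel the linear factors M - z of an
  annihilating polynomial of M off a conjugate solution x one at a time: the last nonzero image
  is again a conjugate solution, now with values in the z-eigenspace, so one of its components
  solves the scalar equation with r = z. Conversely sin (\<surd>(-\<lambda>) t) x is a conjugate solution
  for an eigenvector x with eigenvalue \<lambda> < 0.\<close>

lemma nonneg_vanishes_right_if_deriv_le:
  fixes E E' :: "real \<Rightarrow> real"
  assumes deriv: "\<And>t. (E has_real_derivative E' t) (at t)"
    and nonneg: "\<And>t. 0 \<le> E t" and bound: "\<And>t. E' t \<le> K * E t"
    and "E c = 0" "c \<le> t"
  shows "E t = 0"
proof -
  define F where "F s = exp (- K * s) * E s" for s
  have "F t \<le> F c"
  proof (rule DERIV_nonpos_imp_nonincreasing[OF \<open>c \<le> t\<close>])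
    fix s
    have "(F has_real_derivative exp (- K * s) * (E' s - K * E s)) (at s)"
      unfolding F_def[abs_def] using deriv[of s]
      by (auto intro!: derivative_eq_intros simp: algebra_simps)
    moreover have "exp (- K * s) * (E' s - K * E s) \<le> 0"
      using bound[of s] by (simp add: mult_nonneg_nonpos)
    ultimately show "\<exists>y. DERIV F s :> y \<and> y \<le> 0" by blast
  qed
  then show ?thesis
    using \<open>E c = 0\<close> nonneg[of t] by (simp add: F_def mult_le_0_iff)
qed

lemma nonneg_vanishes_if_abs_deriv_le:
  fixes E E' :: "real \<Rightarrow> real"
  assumes deriv: "\<And>t. (E has_real_derivative E' t) (at t)"
    and nonneg: "\<And>t. 0 \<le> E t" and bound: "\<And>t. \<bar>E' t\<bar> \<le> K * E t"
    and "E c = 0"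
  shows "E t = 0"
proof (cases "c \<le> t")
  case True
  show ?thesis
    by (rule nonneg_vanishes_right_if_deriv_le[OF deriv nonneg _ \<open>E c = 0\<close> True])
      (use bound abs_le_iff in blast)
next
  case False
  have "((\<lambda>s. E (- s)) has_real_derivative - E' (- s)) (at s)" for s
    using deriv[of "- s"] DERIV_mirror by blast
  from nonneg_vanishes_right_if_deriv_le[OF this nonneg, of K "- c" "- t"]
  show ?thesis using bound abs_le_iff False \<open>E c = 0\<close> by force
qed

lemma second_order_linear_zero_if_zero_initial:
  fixes u u' :: "real \<Rightarrow> 'a::{real_inner, real_normed_algebra}"
  assumes u: "\<And>t. (u has_vector_derivative u' t) (at t)"
    and u': "\<And>t. (u' has_vector_derivative r * u t) (at t)"
    and "u c = 0" "u' c = 0"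
  shows "u t = 0"
proof -
  define E where "E t = u t \<bullet> u t + u' t \<bullet> u' t" for t
  define E' where "E' t = 2 * (u t \<bullet> u' t) + 2 * (u' t \<bullet> (r * u t))" for t
  have "(E has_real_derivative E' t) (at t)" for t
  proof -
    have "(E has_vector_derivative E' t) (at t)"
      unfolding E_def[abs_def] E'_def
      using has_vector_derivative_add[OF
          bounded_bilinear.has_vector_derivative[OF bounded_bilinear_inner u u]
          bounded_bilinear.has_vector_derivative[OF bounded_bilinear_inner u' u']]
      by (simp add: inner_commute)
    then show ?thesis by (simp add: has_real_derivative_iff_has_vector_derivative)
  qed
  moreover have "0 \<le> E t" for t
    by (simp add: E_def)
  moreover have "\<bar>E' t\<bar> \<le> (1 + norm r) * E t" for t
  proof -
    have "\<bar>E' t\<bar> \<le> 2 * (norm (u t) * norm (u' t)) + 2 * (norm (u' t) * norm (r * u t))"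
      unfolding E'_def
      by (intro order_trans[OF abs_triangle_ineq] add_mono) (simp_all add: abs_mult Cauchy_Schwarz_ineq2)
    also have "\<dots> \<le> 2 * (norm (u t) * norm (u' t)) + 2 * (norm (u' t) * (norm r * norm (u t)))"
      using mult_left_mono[OF norm_mult_ineq norm_ge_zero] by simp
    also have "\<dots> = (1 + norm r) * (2 * (norm (u t) * norm (u' t)))"
      by (simp add: algebra_simps)
    also have "\<dots> \<le> (1 + norm r) * ((norm (u t))\<^sup>2 + (norm (u' t))\<^sup>2)"
      using sum_squares_bound[of "norm (u t)" "norm (u' t)"] by (intro mult_left_mono) auto
    finally show ?thesis by (simp add: E_def power2_norm_eq_inner)
  qed
  moreover have "E c = 0"
    using assms by (simp add: E_def)
  ultimately have "E t = 0"
    by (rule nonneg_vanishes_if_abs_deriv_le)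
  then show ?thesis
    by (simp add: E_def add_nonneg_eq_0_iff)
qed

definition second_order_solution :: "('a::real_normed_vector \<Rightarrow> 'a) \<Rightarrow> (real \<Rightarrow> 'a) \<Rightarrow> bool" where
  "second_order_solution f x \<longleftrightarrow> (\<exists>x'. \<forall>t. (x has_vector_derivative x' t) (at t) \<and>
                                          (x' has_vector_derivative f (x t)) (at t))"

lemma second_order_solution_linear_image:
  assumes "second_order_solution f x" "bounded_linear L" "\<And>t. L (f (x t)) = g (L (x t))"
  shows "second_order_solution g (\<lambda>t. L (x t))"
proof -
  obtain x' where "\<And>t. (x has_vector_derivative x' t) (at t)"
    and "\<And>t. (x' has_vector_derivative f (x t)) (at t)"
    using assms(1) unfolding second_order_solution_def by blast
  then have "((\<lambda>t. L (x t)) has_vector_derivative L (x' t)) (at t)"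
    and "((\<lambda>t. L (x' t)) has_vector_derivative g (L (x t))) (at t)" for t
    using bounded_linear.has_vector_derivative[OF assms(2)] assms(3) by metis+
  then show ?thesis
    unfolding second_order_solution_def by (intro exI[of _ "\<lambda>t. L (x' t)"]) blast
qed

lemma is_solution_iff_second_order_solution:
  "is_solution A v \<longleftrightarrow> second_order_solution ((*v) A) v"
  by (simp add: is_solution_def second_order_solution_def)

lemma scalar_conjugate_points_imp_negative:
  fixes u :: "real \<Rightarrow> complex"
  assumes "second_order_solution ((*) r) u"
    and "a < b" "u a = 0" "u b = 0" "u s \<noteq> 0"
  shows "\<exists>l<0. r = of_real l"
proof (rule ccontr)
  assume not_negative: "\<not> (\<exists>l<0. r = of_real l)"
  obtain u' where u: "\<And>t. (u has_vector_derivative u' t) (at t)"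
    and u': "\<And>t. (u' has_vector_derivative r * u t) (at t)"
    using assms(1) unfolding second_order_solution_def by blast
  obtain k where k: "0 \<le> Re r + k * Im r"
  proof (cases "Im r = 0")
    case True
    then have "r = of_real (Re r)"
      by (simp add: complex_eq_iff)
    with True not_negative show ?thesis
      using that[of 0] by force
  next
    case False
    then show ?thesis
      using that[of "- Re r / Im r"] by simp
  qed
  \<comment> \<open>On complex numbers, z \<bullet> w = Re (z * cnj w).\<close>
  define g where "g t = (Complex 1 (- k) * u' t) \<bullet> u t" for t
  define g' where "g' t = (Re r + k * Im r) * (cmod (u t))\<^sup>2 + (cmod (u' t))\<^sup>2" for t
  have g_deriv: "(g has_real_derivative g' t) (at t)" for t
  proof -
    have "(g has_vector_derivative
            (Complex 1 (- k) * u' t) \<bullet> u' t + (Complex 1 (- k) * (r * u t)) \<bullet> u t) (at t)"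
      unfolding g_def[abs_def]
      by (rule bounded_bilinear.has_vector_derivative[OF bounded_bilinear_inner
            bounded_linear.has_vector_derivative[OF bounded_linear_mult_right u'] u])
    moreover have "(Complex 1 (- k) * u' t) \<bullet> u' t + (Complex 1 (- k) * (r * u t)) \<bullet> u t = g' t"
      unfolding g'_def cmod_power2 by (simp add: inner_complex_def power2_eq_square algebra_simps)
    ultimately show ?thesis
      by (simp add: has_real_derivative_iff_has_vector_derivative)
  qed
  have g_mono: "g x \<le> g y" if "x \<le> y" for x y
    using DERIV_nonneg_imp_nondecreasing[OF that] g_deriv k
    by (metis g'_def add_nonneg_nonneg mult_nonneg_nonneg zero_le_power2)
  have g_zero: "g t = 0" if "a \<le> t" "t \<le> b" for t
    using g_mono[OF that(1)] g_mono[OF that(2)] assms(3,4) by (simp add: g_def)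
  have "u' t = 0" if "a < t" "t < b" for t
  proof -
    have "g' t = 0"
      by (rule DERIV_local_const[OF g_deriv, of "min (t - a) (b - t)"]) (use that g_zero in auto)
    then show ?thesis
      using k by (simp add: g'_def add_nonneg_eq_0_iff)
  qed
  moreover have "continuous_on UNIV u'"
    using u' by (meson continuous_at_imp_continuous_on has_vector_derivative_continuous)
  ultimately have "closure {a<..<b} \<subseteq> {t. u' t = 0}"
    by (intro closure_minimal closed_Collect_eq) auto
  then have "u' a = 0"
    using \<open>a < b\<close> by (simp add: subset_iff)
  then have "u s = 0"
    by (rule second_order_linear_zero_if_zero_initial[OF u u' \<open>u a = 0\<close>])
  with \<open>u s \<noteq> 0\<close> show False ..
qed

text \<open>poly_action M p v is p(M) v, evaluated by Horner's rule.\<close>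

definition poly_action :: "'a::field^'n^'n \<Rightarrow> 'a poly \<Rightarrow> 'a^'n \<Rightarrow> 'a^'n" where
  "poly_action M p = fold_coeffs (\<lambda>a f v. a *s v + M *v f v) p (\<lambda>v. 0)"

lemma poly_action_0 [simp]: "poly_action M 0 v = 0"
  by (simp add: poly_action_def)

lemma poly_action_pCons [simp]: "poly_action M (pCons a p) v = a *s v + M *v poly_action M p v"
  by (cases "p = 0 \<and> a = 0") (auto simp: poly_action_def)

lemma poly_action_add: "poly_action M (p + q) v = poly_action M p v + poly_action M q v"
proof (induction p arbitrary: q)
  case (pCons a p)
  then show ?case
    by (cases q) (simp add: algebra_simps)
qed simp

lemma poly_action_diff: "poly_action M (p - q) v = poly_action M p v - poly_action M q v"
  using poly_action_add[of M "p - q" q v] by simp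

lemma poly_action_smult: "poly_action M (smult c p) v = c *s poly_action M p v"
  by (induction p)
    (simp_all add: vector_add_ldistrib vector_scalar_commute vector_smult_assoc mult.commute)

lemma poly_action_mult: "poly_action M (p * q) v = poly_action M p (poly_action M q v)"
  by (induction p) (simp_all add: poly_action_add poly_action_smult)

lemma poly_action_sum: "poly_action M (\<Sum>i\<in>I. p i) v = (\<Sum>i\<in>I. poly_action M (p i) v)"
  by (induction I rule: infinite_finite_induct) (simp_all add: poly_action_add)

primrec mat_pow :: "'a::semiring_1^'n^'n \<Rightarrow> nat \<Rightarrow> 'a^'n^'n" where
  "mat_pow M 0 = mat 1"
| "mat_pow M (Suc k) = M ** mat_pow M k"

lemma poly_action_monom: "poly_action M (monom c k) v = c *s (mat_pow M k *v v)"
  by (induction k) (simp_all add: monom_0 monom_Suc vector_scalar_commute matrix_vector_mul_assoc)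

lemma poly_action_annihilator_exists:
  fixes M :: "complex^'n^'n"
  obtains q where "q \<noteq> 0" "\<And>v. poly_action M q v = 0"
proof (cases "inj_on (mat_pow M) {..DIM(complex^'n^'n)}")
  case True
  define N where "N = DIM(complex^'n^'n)"
  define S where "S = mat_pow M ` {..N}"
  have "card S = Suc N"
    using True by (simp add: S_def N_def card_image)
  then have "dependent S"
    using dependent_biggerset[of S] by (simp add: S_def N_def)
  then obtain c where c: "\<exists>B\<in>S. c B \<noteq> 0" "(\<Sum>B\<in>S. c B *\<^sub>R B) = 0"
    using dependent_finite[of S] by (auto simp: S_def)
  define q where "q = (\<Sum>i\<le>N. monom (complex_of_real (c (mat_pow M i))) i)"
  have "q \<noteq> 0"
  proof
    assume "q = 0"
    from c(1) obtain j where "j \<le> N" "c (mat_pow M j) \<noteq> 0"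
      by (auto simp: S_def)
    moreover have "coeff q j = complex_of_real (c (mat_pow M j))"
      using \<open>j \<le> N\<close> by (simp add: q_def coeff_sum coeff_monom)
    ultimately show False
      using \<open>q = 0\<close> by simp
  qed
  moreover have "poly_action M q v = 0" for v
  proof -
    have "poly_action M q v = (\<Sum>i\<le>N. (c (mat_pow M i) *\<^sub>R mat_pow M i) *v v)"
      by (simp add: q_def poly_action_sum poly_action_monom vec_eq_iff matrix_vector_mult_def
          sum_distrib_left mult_ac scaleR_conv_of_real[where 'a=complex])
    also have "\<dots> = (\<Sum>B\<in>S. c B *\<^sub>R B) *v v"
      unfolding S_def using True
      by (simp add: sum.reindex N_def vec_eq_iff matrix_vector_mult_def sum_distrib_right
          sum.swap[of _ UNIV])
    finally show ?thesis
      using c(2) by simp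
  qed
  ultimately show ?thesis
    using that by blast
next
  case False
  then obtain i j where "i \<noteq> j" "mat_pow M i = mat_pow M j"
    unfolding inj_on_def by blast
  then show ?thesis
    using that[of "monom 1 i - monom 1 j"]
    by (simp add: poly_action_diff poly_action_monom monom_eq_iff')
qed

lemma mat_vector_mult: "mat c *v x = c *s x"
  by (simp add: vec_eq_iff matrix_vector_mult_def mat_def if_distrib if_distribR
      cong del: if_weak_cong)

lemma eigen_solution_conjugate_imp_negative:
  fixes M :: "complex^'n^'n"
  assumes "second_order_solution ((*v) M) x" "\<And>t. M *v x t = z *s x t"
    and "a < b" "x a = 0" "x b = 0" "x s \<noteq> 0"
  shows "\<exists>l<0. z = of_real l"
proof -
  from \<open>x s \<noteq> 0\<close> obtain i where "x s $ i \<noteq> 0"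
    by (auto simp: vec_eq_iff)
  have "second_order_solution ((*) z) (\<lambda>t. x t $ i)"
    by (rule second_order_solution_linear_image[OF assms(1) bounded_linear_vec_nth])
      (simp add: assms(2))
  then show ?thesis
    by (rule scalar_conjugate_points_imp_negative) (use assms \<open>x s $ i \<noteq> 0\<close> in auto)
qed

lemma annihilated_conjugate_solution_imp_negative_eigenvalue:
  fixes M :: "complex^'n^'n"
  assumes "q \<noteq> 0" "\<And>t. poly_action M q (x t) = 0"
    and "second_order_solution ((*v) M) x" "a < b" "x a = 0" "x b = 0" "x s \<noteq> 0"
  shows "\<exists>l<0. \<exists>w. w \<noteq> 0 \<and> M *v w = of_real l *s w"
  using assms
proof (induction "degree q" arbitrary: q x s rule: less_induct)
  case less
  show ?case
  proof (cases "degree q = 0")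
    case True
    then obtain c where "q = [:c:]"
      by (metis degree_eq_zeroE)
    with less.prems(1,2,7) show ?thesis
      by auto
  next
    case False
    then obtain z where "poly q z = 0"
      using fundamental_theorem_of_algebra_alt by (metis degree_pCons_0)
    then obtain q' where q: "q = q' * [:-z, 1:]"
      by (metis dvdE mult.commute poly_eq_0_iff_dvd)
    with less.prems(1) have "q' \<noteq> 0"
      by auto
    then have "degree q' < degree q"
      unfolding q by (subst degree_mult_eq) auto
    define S where "S = M - mat z"
    have S_apply: "S *v y = M *v y - z *s y" for y
      by (simp add: S_def matrix_vector_mult_diff_rdistrib mat_vector_mult)
    have S_factor: "poly_action M [:-z, 1:] y = S *v y" for y
      by (simp add: S_apply vec_eq_iff)
    show ?thesis
    proof (cases "\<forall>t. S *v x t = 0")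
      case True
      then have "M *v x t = z *s x t" for t
        by (simp add: S_apply)
      with eigen_solution_conjugate_imp_negative[OF less.prems(3) this less.prems(4-7)]
      show ?thesis
        using less.prems(7) by blast
    next
      case False
      then obtain s' where "S *v x s' \<noteq> 0"
        by blast
      moreover have "second_order_solution ((*v) M) (\<lambda>t. S *v x t)"
        by (rule second_order_solution_linear_image[OF less.prems(3)
              matrix_vector_mul_bounded_linear])
          (simp add: S_apply vector_scalar_commute algebra_simps)
      moreover have "poly_action M q' (S *v x t) = 0" for t
        using less.prems(2)[of t] unfolding q poly_action_mult S_factor .
      ultimately show ?thesis
        using less.hyps[OF \<open>degree q' < degree q\<close> \<open>q' \<noteq> 0\<close>, of "\<lambda>t. S *v x t" s']
          less.prems(4-6) by simp
    qed
  qed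
qed

definition complex_vec :: "real^'n \<Rightarrow> complex^'n" where
  "complex_vec v = (\<chi> i. complex_of_real (v $ i))"

definition complex_mat :: "real^'n^'m \<Rightarrow> complex^'n^'m" where
  "complex_mat A = (\<chi> i j. complex_of_real (A $ i $ j))"

lemma complex_mat_vector_mult: "complex_mat A *v complex_vec v = complex_vec (A *v v)"
  by (simp add: vec_eq_iff matrix_vector_mult_def complex_mat_def complex_vec_def)

lemma complex_vec_eq_0_iff [simp]: "complex_vec v = 0 \<longleftrightarrow> v = 0"
  by (simp add: vec_eq_iff complex_vec_def)

lemma bounded_linear_complex_vec: "bounded_linear complex_vec"
proof -
  have "linear complex_vec"
    by (rule linearI) (simp_all add: vec_eq_iff complex_vec_def scaleR_conv_of_real[where 'a=complex])
  then show ?thesis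
    by (simp add: linear_conv_bounded_linear)
qed

lemma real_eigenvalue_if_complex_eigenvector:
  assumes "w \<noteq> 0" "complex_mat A *v w = of_real l *s w"
  shows "real_eigenvalue A l"
proof -
  define re where "re = (\<chi> i. Re (w $ i))"
  define im where "im = (\<chi> i. Im (w $ i))"
  have row: "(\<Sum>j\<in>UNIV. of_real (A $ i $ j) * w $ j) = of_real l * w $ i" for i
    using assms(2) by (simp add: vec_eq_iff matrix_vector_mult_def complex_mat_def)
  have "A *v re = l *\<^sub>R re"
    using arg_cong[OF row, of Re] by (simp add: vec_eq_iff matrix_vector_mult_def re_def Re_sum)
  moreover have "A *v im = l *\<^sub>R im"
    using arg_cong[OF row, of Im] by (simp add: vec_eq_iff matrix_vector_mult_def im_def Im_sum)
  moreover have "re \<noteq> 0 \<or> im \<noteq> 0"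
    using assms(1) by (auto simp: vec_eq_iff re_def im_def complex_eq_iff)
  ultimately show ?thesis
    unfolding real_eigenvalue_def by blast
qed

lemma conjugate_imp_negative_eigenvalue:
  assumes "conjugate A t0 t1"
  shows "\<exists>l<0. real_eigenvalue A l"
proof -
  obtain v s where "t0 < t1" "is_solution A v" "v s \<noteq> 0" "v t0 = 0" "v t1 = 0"
    using assms unfolding conjugate_def by blast
  have "second_order_solution ((*v) A) v"
    using \<open>is_solution A v\<close> by (simp add: is_solution_iff_second_order_solution)
  then have complex_solution:
    "second_order_solution ((*v) (complex_mat A)) (\<lambda>t. complex_vec (v t))"
    by (rule second_order_solution_linear_image[OF _ bounded_linear_complex_vec])
      (simp add: complex_mat_vector_mult)
  obtain q where "q \<noteq> 0" "\<And>v. poly_action (complex_mat A) q v = 0"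
    using poly_action_annihilator_exists by blast
  then obtain l w where "l < 0" "w \<noteq> 0" "complex_mat A *v w = of_real l *s w"
    using annihilated_conjugate_solution_imp_negative_eigenvalue[OF \<open>q \<noteq> 0\<close> _ complex_solution
        \<open>t0 < t1\<close>, of s] \<open>v s \<noteq> 0\<close> \<open>v t0 = 0\<close> \<open>v t1 = 0\<close> by auto
  then show ?thesis
    using real_eigenvalue_if_complex_eigenvector by blast
qed

lemma negative_eigenvalue_imp_conjugate:
  assumes "l < 0" "real_eigenvalue A l"
  shows "conjugate A 0 (pi / sqrt (- l))"
proof -
  obtain x where "x \<noteq> 0" "A *v x = l *\<^sub>R x"
    using assms(2) unfolding real_eigenvalue_def by blast
  define \<omega> where "\<omega> = sqrt (- l)"
  have "\<omega> > 0" "l = - \<omega>\<^sup>2"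
    using assms(1) by (auto simp: \<omega>_def)
  define v where "v t = sin (\<omega> * t) *\<^sub>R x" for t
  have "(v has_vector_derivative (\<omega> * cos (\<omega> * t)) *\<^sub>R x) (at t)" for t
    unfolding v_def by (auto intro!: derivative_eq_intros)
  moreover have "((\<lambda>t. (\<omega> * cos (\<omega> * t)) *\<^sub>R x) has_vector_derivative A *v v t) (at t)" for t
    using \<open>A *v x = l *\<^sub>R x\<close> \<open>l = - \<omega>\<^sup>2\<close>
    by (auto intro!: derivative_eq_intros
        simp: v_def matrix_vector_mult_scaleR power2_eq_square algebra_simps)
  ultimately have "is_solution A v"
    unfolding is_solution_def by (intro exI[of _ "\<lambda>t. (\<omega> * cos (\<omega> * t)) *\<^sub>R x"]) blast
  moreover have "v (pi / \<omega> / 2) \<noteq> 0" "v 0 = 0" "v (pi / \<omega>) = 0"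
    using \<open>\<omega> > 0\<close> \<open>x \<noteq> 0\<close> by (simp_all add: v_def)
  ultimately show ?thesis
    unfolding conjugate_def \<omega>_def[symmetric] using \<open>\<omega> > 0\<close> by auto
qed

theorem lemma3p4:
  fixes A :: "real^'n^'n"
  shows "(\<exists>t0 t1. t0 < t1 \<and> conjugate A t0 t1) \<longleftrightarrow> (\<exists>l. l < 0 \<and> real_eigenvalue A l)"
proof
  assume "\<exists>t0 t1. t0 < t1 \<and> conjugate A t0 t1"
  then show "\<exists>l. l < 0 \<and> real_eigenvalue A l"
    using conjugate_imp_negative_eigenvalue by blast
next
  assume "\<exists>l. l < 0 \<and> real_eigenvalue A l"
  then obtain l where "l < 0" "real_eigenvalue A l"
    by blast
  then have "conjugate A 0 (pi / sqrt (- l))"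
    by (rule negative_eigenvalue_imp_conjugate)
  then show "\<exists>t0 t1. t0 < t1 \<and> conjugate A t0 t1"
    unfolding conjugate_def by blast
qed

end
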